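(* Let $P=(p_{xy})$ be an ergodic reversible Markov chain on $X=\{1,\ldots,n\}$ with stationary distribution $\pi$, and assume that all eigenvalues of $P$ are positive. Then: (1) for all $z\in X$, $\mathsf{QHT}(P,z)\le\sqrt{\mathsf{HT}(P,z)/2}$; (2) for all $z\in X$ and all $\varepsilon\in(0,1)$, $\mathsf{QHT}_\varepsilon(P,z)=\sqrt{\mathsf{HT}_\varepsilon(P,z)}$.
   Context: Classical quantities: $\mathsf{HT}(P,z)$ is the expected number of steps for the chain started from $\pi$ to reach $z$. Let $P_{-z}$ be $P$ with row and column $z$ deleted, $\Pi_{-z}=\mathrm{diag}(\pi_x)_{x\ne z}$, $S_{-z}=\sqrt{\Pi_{-z}}P_{-z}\sqrt{\Pi_{-z}}^{-1}$ (real symmetric with eigenvalues in $[0,1)$), $v_1,\ldots,v_{n-1}$ an orthonormal eigenbasis of $S_{-z}$ with eigenvalues $\cos\theta_j$, $0<\theta_j\le\pi/2$, and $\sqrt{\pi_{-z}}=\sum_j\nu_jv_j$ (entrywise square root of $\pi$ without coordinate $z$). $H_z$ takes value $1/\theta_j^2$ with probability $\nu_j^2$ and $0$ with probability $1-\sum_j\nu_j^2$; $\mathsf{HT}_\varepsilon(P,z)=\min\{y:\Pr[H_z>y]\le\varepsilon\}$. Quantum quantities: on $\mathcal H=\mathbb C^{X\times X}$ let $|p_x\rangle=\sum_y\sqrt{p_{xy}}|y\rangle$, $\mathcal A=\mathrm{Span}(|x\rangle|p_x\rangle:x\in X)$, $\mathrm{ref}(\mathcal A)=2\Pi_{\mathcal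 A}-I$ where $\Pi_{\mathcal A}$ is the orthogonal projector onto $\mathcal A$, and $\mathsf{SWAP}|x\rangle|y\rangle=|y\rangle|x\rangle$. Set $U_2=\mathsf{SWAP}\cdot\mathrm{ref}(\mathcal A)$, $|\phi_0\rangle=\sum_x\sqrt{\pi_x}|x\rangle|p_x\rangle$, $|\mu\rangle=|z\rangle|p_z\rangle$, $U=U_2(I-2|\mu\rangle\langle\mu|)$ and $|\tilde\phi_0\rangle=|\phi_0\rangle-\langle\mu|\phi_0\rangle|\mu\rangle=\sum_{x\ne z}\sqrt{\pi_x}|x\rangle|p_x\rangle$. Decompose $|\tilde\phi_0\rangle=\delta_0|w_0\rangle+\sum_j\delta_j(|w_j^+\rangle+|w_j^-\rangle)+\delta_{-1}|w_{-1}\rangle$ with real coefficients in unit eigenvectors of the real unitary $U$ (eigenvalues $1$, $-1$, and $e^{\pm i\alpha_j}$ with $0<\alpha_j<\pi$, $|w_j^-\rangle=\overline{|w_j^+\rangle}$). $\mathit{QH}$ takes value $1/\alpha_j$ w.p. $2\delta_j^2$, $1/\pi$ w.p. $\delta_{-1}^2$, $0$ otherwise. Then $\mathsf{QHT}(P,z)=\mathbb E[\mathit{QH}]$ and $\mathsf{QHT}_\varepsilon(P,z)=\min\{y:\Pr[\mathit{QH}>y]\le\varepsilon\}$. *)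

theory Defs
  imports Complex_Main
begin

definition markov :: "('a::finite \<Rightarrow> 'a \<Rightarrow> real) \<Rightarrow> bool" where
  "markov P \<longleftrightarrow> (\<forall>x y. P x y \<ge> 0) \<and> (\<forall>x. (\<Sum>y\<in>UNIV. P x y) = 1)"

fun rpow :: "'a set \<Rightarrow> ('a::finite \<Rightarrow> 'a \<Rightarrow> real) \<Rightarrow> nat \<Rightarrow> 'a \<Rightarrow> 'a \<Rightarrow> real" where
  "rpow A P 0 x y = (if x = y then 1 else 0)"
| "rpow A P (Suc t) x y = (\<Sum>w\<in>A. rpow A P t x w * P w y)"

abbreviation mpow :: "('a::finite \<Rightarrow> 'a \<Rightarrow> real) \<Rightarrow> nat \<Rightarrow> 'a \<Rightarrow> 'a \<Rightarrow> real" where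
  "mpow P t \<equiv> rpow UNIV P t"

definition irreducible_chain :: "('a::finite \<Rightarrow> 'a \<Rightarrow> real) \<Rightarrow> bool" where
  "irreducible_chain P \<longleftrightarrow> (\<forall>x y. \<exists>t. mpow P t x y > 0)"

definition aperiodic_chain :: "('a::finite \<Rightarrow> 'a \<Rightarrow> real) \<Rightarrow> bool" where
  "aperiodic_chain P \<longleftrightarrow> (\<forall>x. Gcd {t. t > 0 \<and> mpow P t x x > 0} = 1)"

definition ergodic_chain :: "('a::finite \<Rightarrow> 'a \<Rightarrow> real) \<Rightarrow> bool" where
  "ergodic_chain P \<longleftrightarrow> markov P \<and> irreducible_chain P \<and> aperiodic_chain P"

definition stationary_distr :: "('a::finite \<Rightarrow> 'a \<Rightarrow> real) \<Rightarrow> ('a \<Rightarrow> real) \<Rightarrow> bool" where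
  "stationary_distr P st \<longleftrightarrow> (\<forall>x. st x \<ge> 0) \<and> (\<Sum>x\<in>UNIV. st x) = 1 \<and>
     (\<forall>y. (\<Sum>x\<in>UNIV. st x * P x y) = st y)"

definition reversible_chain :: "('a::finite \<Rightarrow> 'a \<Rightarrow> real) \<Rightarrow> ('a \<Rightarrow> real) \<Rightarrow> bool" where
  "reversible_chain P st \<longleftrightarrow> (\<forall>x y. st x * P x y = st y * P y x)"

definition matrix_eigenvalue :: "('a::finite \<Rightarrow> 'a \<Rightarrow> real) \<Rightarrow> complex \<Rightarrow> bool" where
  "matrix_eigenvalue P lam \<longleftrightarrow>
     (\<exists>v :: 'a \<Rightarrow> complex. v \<noteq> (\<lambda>_. 0) \<and> (\<forall>x. (\<Sum>y\<in>UNIV. complex_of_real (P x y) * v y) = lam * v x))"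

definition all_eigenvalues_positive :: "('a::finite \<Rightarrow> 'a \<Rightarrow> real) \<Rightarrow> bool" where
  "all_eigenvalues_positive P \<longleftrightarrow>
     (\<forall>lam. matrix_eigenvalue P lam \<longrightarrow> Im lam = 0 \<and> Re lam > 0)"

text \<open>Pr[T > t] for the chain started from st, T = min {t >= 0. X_t = z}:
  the probability that X_0, ..., X_t all differ from z.\<close>
definition not_hit_prob :: "('a::finite \<Rightarrow> 'a \<Rightarrow> real) \<Rightarrow> ('a \<Rightarrow> real) \<Rightarrow> 'a \<Rightarrow> nat \<Rightarrow> real" where
  "not_hit_prob P st z t = (\<Sum>x\<in>UNIV - {z}. \<Sum>y\<in>UNIV - {z}. st x * rpow (UNIV - {z}) P t x y)"

text \<open>HT(P,z) = E[T] = sum over t >= 0 of Pr[T > t].\<close>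
definition HT :: "('a::finite \<Rightarrow> 'a \<Rightarrow> real) \<Rightarrow> ('a \<Rightarrow> real) \<Rightarrow> 'a \<Rightarrow> real" where
  "HT P st z = (\<Sum>t. not_hit_prob P st z t)"

definition Smat :: "('a::finite \<Rightarrow> 'a \<Rightarrow> real) \<Rightarrow> ('a \<Rightarrow> real) \<Rightarrow> 'a \<Rightarrow> 'a \<Rightarrow> real" where
  "Smat P st x y = sqrt (st x) * P x y / sqrt (st y)"

definition classical_spectral_data ::
  "('a::finite \<Rightarrow> 'a \<Rightarrow> real) \<Rightarrow> ('a \<Rightarrow> real) \<Rightarrow> 'a \<Rightarrow> nat set \<Rightarrow> (nat \<Rightarrow> 'a \<Rightarrow> real) \<Rightarrow> (nat \<Rightarrow> real) \<Rightarrow> bool" where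
  "classical_spectral_data P st z J v \<theta> \<longleftrightarrow>
     finite J \<and> card J = card (UNIV :: 'a set) - 1 \<and>
     (\<forall>j\<in>J. \<forall>k\<in>J. (\<Sum>x\<in>UNIV - {z}. v j x * v k x) = (if j = k then 1 else 0)) \<and>
     (\<forall>j\<in>J. \<forall>x\<in>UNIV - {z}. (\<Sum>y\<in>UNIV - {z}. Smat P st x y * v j y) = cos (\<theta> j) * v j x) \<and>
     (\<forall>j\<in>J. 0 < \<theta> j \<and> \<theta> j \<le> pi / 2)"

text \<open>nu_j = <sqrt(pi_{-z}), v_j>, so that sqrt(pi_{-z}) = sum_j nu_j v_j.\<close>
definition nu_coef :: "('a::finite \<Rightarrow> real) \<Rightarrow> 'a \<Rightarrow> (nat \<Rightarrow> 'a \<Rightarrow> real) \<Rightarrow> nat \<Rightarrow> real" where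
  "nu_coef st z v j = (\<Sum>x\<in>UNIV - {z}. sqrt (st x) * v j x)"

text \<open>Pr[H_z > y], where H_z = 1/theta_j^2 w.p. nu_j^2 and 0 w.p. 1 - sum_j nu_j^2.\<close>
definition H_tail ::
  "('a::finite \<Rightarrow> real) \<Rightarrow> 'a \<Rightarrow> nat set \<Rightarrow> (nat \<Rightarrow> 'a \<Rightarrow> real) \<Rightarrow> (nat \<Rightarrow> real) \<Rightarrow> real \<Rightarrow> real" where
  "H_tail st z J v \<theta> y =
     (\<Sum>j\<in>{j\<in>J. 1 / (\<theta> j)\<^sup>2 > y}. (nu_coef st z v j)\<^sup>2) +
     (if 0 > y then 1 - (\<Sum>j\<in>J. (nu_coef st z v j)\<^sup>2) else 0)"

definition HT_eps ::
  "('a::finite \<Rightarrow> real) \<Rightarrow> 'a \<Rightarrow> nat set \<Rightarrow> (nat \<Rightarrow> 'a \<Rightarrow> real) \<Rightarrow> (nat \<Rightarrow> real) \<Rightarrow> real \<Rightarrow> real" where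
  "HT_eps st z J v \<theta> \<epsilon> = (LEAST y. H_tail st z J v \<theta> y \<le> \<epsilon>)"

type_synonym 'a qvec = "'a \<times> 'a \<Rightarrow> complex"

definition qinner :: "'a::finite qvec \<Rightarrow> 'a qvec \<Rightarrow> complex" where
  "qinner a b = (\<Sum>i\<in>UNIV. cnj (a i) * b i)"

definition qnorm2 :: "'a::finite qvec \<Rightarrow> real" where
  "qnorm2 a = (\<Sum>i\<in>UNIV. (cmod (a i))\<^sup>2)"

definition ket_xpx :: "('a::finite \<Rightarrow> 'a \<Rightarrow> real) \<Rightarrow> 'a \<Rightarrow> 'a qvec" where
  "ket_xpx P x = (\<lambda>(a, b). if a = x then complex_of_real (sqrt (P x b)) else 0)"

text \<open>Orthogonal projector onto A = Span(|x>|p_x>); the |x>|p_x> are orthonormal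
  for a stochastic P, so the projector is sum_x |x,p_x><x,p_x|.\<close>
definition proj_A :: "('a::finite \<Rightarrow> 'a \<Rightarrow> real) \<Rightarrow> 'a qvec \<Rightarrow> 'a qvec" where
  "proj_A P \<psi> = (\<lambda>i. \<Sum>x\<in>UNIV. qinner (ket_xpx P x) \<psi> * ket_xpx P x i)"

definition ref_A :: "('a::finite \<Rightarrow> 'a \<Rightarrow> real) \<Rightarrow> 'a qvec \<Rightarrow> 'a qvec" where
  "ref_A P \<psi> = (\<lambda>i. 2 * proj_A P \<psi> i - \<psi> i)"

definition SWAP :: "'a qvec \<Rightarrow> 'a qvec" where
  "SWAP \<psi> = (\<lambda>(a, b). \<psi> (b, a))"

definition U2 :: "('a::finite \<Rightarrow> 'a \<Rightarrow> real) \<Rightarrow> 'a qvec \<Rightarrow> 'a qvec" where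
  "U2 P \<psi> = SWAP (ref_A P \<psi>)"

definition Uop :: "('a::finite \<Rightarrow> 'a \<Rightarrow> real) \<Rightarrow> 'a \<Rightarrow> 'a qvec \<Rightarrow> 'a qvec" where
  "Uop P z \<psi> = U2 P (\<lambda>i. \<psi> i - 2 * qinner (ket_xpx P z) \<psi> * ket_xpx P z i)"

definition phi0_tilde :: "('a::finite \<Rightarrow> 'a \<Rightarrow> real) \<Rightarrow> ('a \<Rightarrow> real) \<Rightarrow> 'a \<Rightarrow> 'a qvec" where
  "phi0_tilde P st z = (\<lambda>i. \<Sum>x\<in>UNIV - {z}. complex_of_real (sqrt (st x)) * ket_xpx P x i)"

text \<open>Quantum spectral data: |tilde phi_0> = c0 + sum_{j in J} delta_j (|w_j^+> + |w_j^->) + cm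
  where c0 = delta_0 |w_0> (a vector in the 1-eigenspace of U), cm = delta_{-1}|w_{-1}>
  (a vector in the (-1)-eigenspace of U), the |w_j^+> are unit eigenvectors of U with eigenvalue
  e^{i alpha_j}, 0 < alpha_j < pi, |w_j^-> = conj |w_j^+>, all w_j^{+-} orthonormal,
  and the delta_j real.\<close>
definition quantum_spectral_data ::
  "('a::finite \<Rightarrow> 'a \<Rightarrow> real) \<Rightarrow> ('a \<Rightarrow> real) \<Rightarrow> 'a \<Rightarrow> nat set \<Rightarrow> (nat \<Rightarrow> real) \<Rightarrow>
    (nat \<Rightarrow> 'a qvec) \<Rightarrow> (nat \<Rightarrow> real) \<Rightarrow> 'a qvec \<Rightarrow> 'a qvec \<Rightarrow> bool" where
  "quantum_spectral_data P st z J \<alpha> w \<delta> c0 cm \<longleftrightarrow>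
     finite J \<and>
     (\<forall>j\<in>J. 0 < \<alpha> j \<and> \<alpha> j < pi) \<and>
     (\<forall>j\<in>J. Uop P z (w j) = (\<lambda>i. cis (\<alpha> j) * w j i)) \<and>
     (\<forall>j\<in>J. \<forall>k\<in>J. qinner (w j) (w k) = (if j = k then 1 else 0)) \<and>
     (\<forall>j\<in>J. \<forall>k\<in>J. qinner (w j) (\<lambda>i. cnj (w k i)) = 0) \<and>
     Uop P z c0 = c0 \<and>
     Uop P z cm = (\<lambda>i. - cm i) \<and>
     phi0_tilde P st z = (\<lambda>i. c0 i + (\<Sum>j\<in>J. complex_of_real (\<delta> j) * (w j i + cnj (w j i))) + cm i)"

text \<open>QHT(P,z) = E[QH], QH = 1/alpha_j w.p. 2 delta_j^2, 1/pi w.p. delta_{-1}^2, 0 otherwise.\<close>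
definition QHT :: "nat set \<Rightarrow> (nat \<Rightarrow> real) \<Rightarrow> (nat \<Rightarrow> real) \<Rightarrow> 'a::finite qvec \<Rightarrow> real" where
  "QHT J \<alpha> \<delta> cm = (\<Sum>j\<in>J. 2 * (\<delta> j)\<^sup>2 * (1 / \<alpha> j)) + qnorm2 cm * (1 / pi)"

definition QH_tail :: "nat set \<Rightarrow> (nat \<Rightarrow> real) \<Rightarrow> (nat \<Rightarrow> real) \<Rightarrow> 'a::finite qvec \<Rightarrow> real \<Rightarrow> real" where
  "QH_tail J \<alpha> \<delta> cm y =
     (\<Sum>j\<in>{j\<in>J. 1 / \<alpha> j > y}. 2 * (\<delta> j)\<^sup>2) +
     (if 1 / pi > y then qnorm2 cm else 0) +
     (if 0 > y then 1 - (\<Sum>j\<in>J. 2 * (\<delta> j)\<^sup>2) - qnorm2 cm else 0)"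

definition QHT_eps :: "nat set \<Rightarrow> (nat \<Rightarrow> real) \<Rightarrow> (nat \<Rightarrow> real) \<Rightarrow> 'a::finite qvec \<Rightarrow> real \<Rightarrow> real" where
  "QHT_eps J \<alpha> \<delta> cm \<epsilon> = (LEAST y. QH_tail J \<alpha> \<delta> cm y \<le> \<epsilon>)"

end

theory Submission
  imports Defs "HOL-Analysis.Analysis"
begin

text \<open>Szegedy's correspondence turns every eigenvector \<open>w\<close> of \<open>U\<close> with eigenvalue \<open>e\<^sup>i\<^sup>\<alpha>\<close> into an
  eigenvector \<open>x \<mapsto> \<langle>x|\<langle>p\<^sub>x|w\<rangle>\<close> of \<open>S\<^sub>-\<^sub>z\<close> with eigenvalue \<open>cos \<alpha>\<close>. For an irreducible chain
  \<open>S\<^sub>-\<^sub>z\<close> has no eigenvalue \<open>\<plusminus>1\<close>, so the \<open>\<plusminus>1\<close>-components of \<open>|\<phi>\<^sub>0\<rangle>\<close> are orthogonal to every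
  \<open>|x\<rangle>|p\<^sub>x\<rangle>\<close>; in particular \<open>\<delta>\<^sub>-\<^sub>1 = 0\<close>, and \<open>\<surd>\<pi>\<^sub>-\<^sub>z = \<Sum>\<^sub>k 2\<delta>\<^sub>k Re \<langle>\<cdot>|w\<^sub>k\<rangle>\<close> is an expansion
  in eigenvectors of \<open>S\<^sub>-\<^sub>z\<close>. Hence \<open>Pr[T > t] = \<Sum>\<^sub>k 2\<delta>\<^sub>k\<^sup>2 cos\<^sup>t \<alpha>\<^sub>k\<close>, so that
  \<open>HT = \<Sum>\<^sub>k 2\<delta>\<^sub>k\<^sup>2/(1 - cos \<alpha>\<^sub>k)\<close>, and the spectral measure of \<open>\<surd>\<pi>\<^sub>-\<^sub>z\<close> puts mass \<open>2\<delta>\<^sub>k\<^sup>2\<close>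
  on the angle \<open>\<alpha>\<^sub>k\<close>: \<open>H\<^sub>z\<close> has the law of \<open>QH\<^sup>2\<close>, which gives (2). For (1), Cauchy--Schwarz gives
  \<open>E[QH]\<^sup>2 \<le> E[QH\<^sup>2]\<close>, and \<open>1 - cos \<alpha> \<le> \<alpha>\<^sup>2/2\<close>.\<close>

lemma rpow_nonneg: "(\<And>a b. 0 \<le> P a b) \<Longrightarrow> 0 \<le> rpow A P t x y"
  by (induction t arbitrary: y) (auto intro!: sum_nonneg)

lemma rpow_eigenvector:
  assumes eig: "\<forall>x\<in>A. (\<Sum>y\<in>A. S x y * f y) = c * f x"
  shows "x \<in> A \<Longrightarrow> (\<Sum>y\<in>A. rpow A S t x y * f y) = c ^ t * f x"
proof (induction t arbitrary: x)
  case 0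
  then show ?case by (simp add: if_distrib[of "\<lambda>t. t * _"] cong: if_cong)
next
  case (Suc t)
  have "(\<Sum>y\<in>A. rpow A S (Suc t) x y * f y) = (\<Sum>w\<in>A. rpow A S t x w * (\<Sum>y\<in>A. S w y * f y))"
    unfolding rpow.simps sum_distrib_left sum_distrib_right mult.assoc by (rule sum.swap)
  also have "\<dots> = c * (\<Sum>w\<in>A. rpow A S t x w * f w)"
    using eig by (simp add: sum_distrib_left algebra_simps)
  finally show ?case using Suc by simp
qed

lemma square_weighted_sum_le:
  fixes p a :: "'i \<Rightarrow> real"
  assumes "\<And>k. k \<in> J \<Longrightarrow> 0 \<le> p k" and "(\<Sum>k\<in>J. p k) \<le> 1"
  shows "(\<Sum>k\<in>J. p k * a k)\<^sup>2 \<le> (\<Sum>k\<in>J. p k * (a k)\<^sup>2)"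
proof -
  have "(\<Sum>k\<in>J. p k * a k)\<^sup>2 = (\<Sum>k\<in>J. sqrt (p k) * (sqrt (p k) * a k))\<^sup>2"
    using assms(1) by (simp add: mult.assoc[symmetric] cong: sum.cong)
  also have "\<dots> \<le> (\<Sum>k\<in>J. (sqrt (p k))\<^sup>2) * (\<Sum>k\<in>J. (sqrt (p k) * a k)\<^sup>2)"
    by (rule Cauchy_Schwarz_ineq_sum)
  also have "\<dots> = (\<Sum>k\<in>J. p k) * (\<Sum>k\<in>J. p k * (a k)\<^sup>2)"
    using assms(1) by (simp add: power_mult_distrib cong: sum.cong)
  also have "\<dots> \<le> (\<Sum>k\<in>J. p k * (a k)\<^sup>2)"
    using assms by (simp add: mult_left_le_one_le sum_nonneg)
  finally show ?thesis .
qed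

lemma inverse_square_le_inverse_one_minus_cos:
  fixes a :: real
  assumes "0 < a" "a < pi"
  shows "1 / a\<^sup>2 \<le> 1 / (2 * (1 - cos a))"
proof (rule divide_left_mono)
  have "sin (a / 2) ^ 2 \<le> (a / 2) ^ 2"
    using abs_sin_x_le_abs_x[of "a / 2"] by (metis abs_ge_zero power2_abs power_mono)
  then show "2 * (1 - cos a) \<le> a\<^sup>2"
    using cos_double_sin[of "a / 2"] by (simp add: power_divide)
  show "0 < a\<^sup>2 * (2 * (1 - cos a))"
    using assms cos_monotone_0_pi[of 0 a] by simp
qed simp

lemma orthonormal_family_complete:
  fixes v :: "'j \<Rightarrow> 'a::finite \<Rightarrow> real"
  assumes "finite Jc" and card: "card Jc = card B"
    and orth: "\<forall>j\<in>Jc. \<forall>k\<in>Jc. (\<Sum>x\<in>B. v j x * v k x) = (if j = k then 1 else 0)"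
    and xy: "x \<in> B" "y \<in> B"
  shows "(\<Sum>j\<in>Jc. v j x * v j y) = (if x = y then 1 else 0)"
proof -
  obtain h where h: "bij_betw h B Jc"
    using finite_same_card_bij[of B Jc] \<open>finite Jc\<close> card by auto
  then have hJ: "a \<in> B \<Longrightarrow> h a \<in> Jc" and inj: "inj_on h B" for a
    by (auto simp: bij_betw_def)
  text \<open>Complete the rows \<open>v (h a)\<close>, \<open>a \<in> B\<close>, by unit vectors to an orthogonal matrix.\<close>
  define M :: "real^'a^'a" where
    "M = (\<chi> a b. if a \<notin> B then (if b = a then 1 else 0) else if b \<in> B then v (h a) b else 0)"
  have M: "M $ a $ b = (if a \<notin> B then (if b = a then 1 else 0) else if b \<in> B then v (h a) b else 0)" for a b
    unfolding M_def by simp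
  have rows: "(\<Sum>b\<in>UNIV. M $ a $ b * M $ a' $ b) = (if a = a' then 1 else 0)" for a a'
  proof -
    have "(\<Sum>b\<in>UNIV. M $ a $ b * M $ a' $ b) =
        (if a \<notin> B then M $ a' $ a
         else if a' \<notin> B then M $ a $ a'
         else (\<Sum>b\<in>B. v (h a) b * v (h a') b))"
      by (auto simp: M if_distrib[of "\<lambda>t. t * _"] if_distrib[of "\<lambda>t. _ * t"] sum.If_cases cong: if_cong)
    also have "\<dots> = (if a = a' then 1 else 0)"
      using orth hJ inj by (auto simp: M dest: inj_onD)
    finally show ?thesis .
  qed
  have "M ** transpose M = mat 1"
    by (simp add: vec_eq_iff matrix_matrix_mult_def mat_def transpose_def rows)
  then have "(transpose M ** M) $ x $ y = mat 1 $ x $ y"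
    using matrix_left_right_inverse by metis
  then have "(\<Sum>a\<in>UNIV. M $ a $ x * M $ a $ y) = (if x = y then 1 else 0)"
    by (simp add: matrix_matrix_mult_def mat_def transpose_def)
  moreover have "(\<Sum>a\<in>UNIV. M $ a $ x * M $ a $ y) = (\<Sum>a\<in>B. v (h a) x * v (h a) y)"
    using xy by (auto simp: M if_distrib[of "\<lambda>t. t * _"] sum.If_cases Compl_eq cong: if_cong)
  moreover have "(\<Sum>a\<in>B. v (h a) x * v (h a) y) = (\<Sum>j\<in>Jc. v j x * v j y)"
    using sum.reindex_bij_betw[OF h, of "\<lambda>j. v j x * v j y"] by simp
  ultimately show ?thesis by simp
qed

lemma threshold_breakpoint:
  fixes a :: "'j \<Rightarrow> real"
  assumes "finite Jc" and "0 \<le> y"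
  shows "\<exists>d\<in>insert 0 (a ` Jc). 0 \<le> d \<and> d \<le> y \<and> {j\<in>Jc. d < a j} = {j\<in>Jc. y < a j}"
proof -
  define D where "D = {d \<in> insert 0 (a ` Jc). 0 \<le> d \<and> d \<le> y}"
  have "finite D" "0 \<in> D"
    using assms unfolding D_def by auto
  then have "Max D \<in> D" and Max_ge: "\<And>d. d \<in> D \<Longrightarrow> d \<le> Max D"
    by (auto intro: Max_in)
  moreover have "Max D < a j \<longleftrightarrow> y < a j" if "j \<in> Jc" for j
  proof
    assume "Max D < a j"
    moreover have "0 \<le> Max D" using \<open>Max D \<in> D\<close> unfolding D_def by simp
    ultimately have "a j \<notin> D" using Max_ge by force
    then show "y < a j" using that \<open>0 \<le> Max D\<close> \<open>Max D < a j\<close> unfolding D_def by auto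
  next
    assume "y < a j"
    then show "Max D < a j" using \<open>Max D \<in> D\<close> unfolding D_def by simp
  qed
  then have "{j\<in>Jc. Max D < a j} = {j\<in>Jc. y < a j}" by blast
  ultimately show ?thesis
    unfolding D_def by blast
qed

text \<open>\<open>LEAST\<close> over the reals means nothing until a least element is exhibited; a tail function
  of a finite distribution attains its threshold at one of its breakpoints.\<close>
lemma step_function_threshold_least:
  fixes a m :: "'j \<Rightarrow> real" and g :: "real \<Rightarrow> real"
  assumes "finite Jc" and neg: "\<And>y. y < 0 \<Longrightarrow> \<not> g y \<le> \<epsilon>"
    and nonneg: "\<And>y. 0 \<le> y \<Longrightarrow> g y = (\<Sum>j\<in>{j\<in>Jc. y < a j}. m j)" and "0 \<le> \<epsilon>"
  shows "\<exists>y0. g y0 \<le> \<epsilon> \<and> (\<forall>y. g y \<le> \<epsilon> \<longrightarrow> y0 \<le> y)"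
proof -
  define C where "C = {d \<in> insert 0 (a ` Jc). 0 \<le> d \<and> g d \<le> \<epsilon>}"
  have "finite C"
    using \<open>finite Jc\<close> unfolding C_def by simp
  have below: "\<exists>d\<in>C. d \<le> y" if "g y \<le> \<epsilon>" for y
  proof -
    have "0 \<le> y" using neg that by (meson not_le)
    then obtain d where "d \<in> insert 0 (a ` Jc)" "0 \<le> d" "d \<le> y" "{j\<in>Jc. d < a j} = {j\<in>Jc. y < a j}"
      using threshold_breakpoint[OF \<open>finite Jc\<close>] by blast
    with that \<open>0 \<le> y\<close> show ?thesis
      unfolding C_def by (intro bexI[of _ d]) (simp_all add: nonneg)
  qed
  define Y where "Y = Max (insert 0 (a ` Jc))"
  have "0 \<le> Y" and "{j\<in>Jc. Y < a j} = {}"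
    using \<open>finite Jc\<close> unfolding Y_def by (auto simp: not_less)
  then have "g Y \<le> \<epsilon>"
    using nonneg[of Y] \<open>0 \<le> \<epsilon>\<close> by (simp del: Collect_empty_eq)
  then have "C \<noteq> {}" using below by blast
  show ?thesis
  proof (intro exI conjI allI impI)
    show "g (Min C) \<le> \<epsilon>"
      using Min_in[OF \<open>finite C\<close> \<open>C \<noteq> {}\<close>] unfolding C_def by simp
    show "Min C \<le> y" if gy: "g y \<le> \<epsilon>" for y
    proof -
      obtain d where "d \<in> C" "d \<le> y" using below[OF gy] by blast
      then show ?thesis using Min_le[OF \<open>finite C\<close>, of d] by linarith
    qed
  qed
qed

lemma Least_threshold_sqrt:
  fixes f g :: "real \<Rightarrow> real"
  assumes least: "g y0 \<le> \<epsilon>" "\<And>y. g y \<le> \<epsilon> \<Longrightarrow> y0 \<le> y"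
    and neg: "\<And>y. y < 0 \<Longrightarrow> \<not> f y \<le> \<epsilon>" "\<And>y. y < 0 \<Longrightarrow> \<not> g y \<le> \<epsilon>"
    and square: "\<And>y. 0 \<le> y \<Longrightarrow> f y = g (y\<^sup>2)"
  shows "(LEAST y. f y \<le> \<epsilon>) = sqrt (LEAST y. g y \<le> \<epsilon>)"
proof -
  have "0 \<le> y0" using neg(2) least(1) by (meson not_le)
  have "(LEAST y. g y \<le> \<epsilon>) = y0"
    by (rule Least_equality) (use least in auto)
  moreover have "(LEAST y. f y \<le> \<epsilon>) = sqrt y0"
  proof (rule Least_equality)
    show "f (sqrt y0) \<le> \<epsilon>"
      using square[of "sqrt y0"] \<open>0 \<le> y0\<close> least(1) by simp
    show "sqrt y0 \<le> y" if "f y \<le> \<epsilon>" for y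
    proof -
      have "0 \<le> y" using neg(1) that by (meson not_le)
      then have "y0 \<le> y\<^sup>2" using least(2) square that by simp
      with \<open>0 \<le> y\<close> show ?thesis by (rule real_le_lsqrt)
    qed
  qed
  ultimately show ?thesis by simp
qed

section \<open>The walk operator\<close>

lemma sum_UNIV_prod:
  "(\<Sum>i\<in>(UNIV::('a::finite \<times> 'b::finite) set). f i) = (\<Sum>a\<in>UNIV. \<Sum>b\<in>UNIV. f (a, b))"
  by (simp add: sum.cartesian_product flip: UNIV_Times_UNIV)

lemma qinner_commute: "qinner b a = cnj (qinner a b)"
  unfolding qinner_def by (simp add: mult.commute)

lemma qinner_self: "qinner a a = complex_of_real (qnorm2 a)"
  unfolding qinner_def qnorm2_def of_real_sum
  by (rule sum.cong) (auto simp: complex_mult_cnj cmod_power2 mult.commute simp del: of_real_power)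

lemma qinner_sum_right: "qinner a (\<lambda>i. \<Sum>x\<in>A. c x * f x i) = (\<Sum>x\<in>A. c x * qinner a (f x))"
  unfolding qinner_def by (simp add: sum_distrib_left sum_distrib_right mult.left_commute sum.swap[of _ A])

lemma qinner_sum_left: "qinner (\<lambda>i. \<Sum>x\<in>A. c x * f x i) b = (\<Sum>x\<in>A. cnj (c x) * qinner (f x) b)"
  by (subst qinner_commute, subst qinner_sum_right) (simp add: qinner_commute[of "f _" b])

lemma qinner_add_right: "qinner a (\<lambda>i. b i + c i) = qinner a b + qinner a c"
  unfolding qinner_def by (simp add: sum.distrib algebra_simps)

lemma qinner_add_left: "qinner (\<lambda>i. a i + b i) c = qinner a c + qinner b c"
  unfolding qinner_def by (simp add: sum.distrib algebra_simps)

lemma qinner_scale: "qinner (\<lambda>i. l * a i) (\<lambda>i. m * b i) = cnj l * m * qinner a b"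
  unfolding qinner_def by (simp add: sum_distrib_left algebra_simps)

lemma qinner_diff_scale_right: "qinner a (\<lambda>i. b i - c * d i) = qinner a b - c * qinner a d"
  unfolding qinner_def by (simp add: sum_subtractf sum_distrib_left algebra_simps)

lemma qinner_reflections:
  "qinner (\<lambda>i. 2 * X i - a i) (\<lambda>i. 2 * Y i - b i) =
     4 * qinner X Y - 2 * qinner X b - 2 * qinner a Y + qinner a b"
proof -
  have "cnj (2 * X i - a i) * (2 * Y i - b i) =
      4 * (cnj (X i) * Y i) - 2 * (cnj (X i) * b i) - 2 * (cnj (a i) * Y i) + cnj (a i) * b i" for i
    by (simp add: algebra_simps)
  then show ?thesis
    unfolding qinner_def by (simp only: sum.distrib sum_subtractf sum_distrib_left[symmetric])
qed

lemma qinner_SWAP: "qinner (SWAP a) (SWAP b) = qinner a b"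
  unfolding qinner_def SWAP_def sum_UNIV_prod prod.case by (rule sum.swap)

lemma cnj_ket_xpx: "cnj (ket_xpx P x i) = ket_xpx P x i"
  unfolding ket_xpx_def by (cases i) auto

lemma qinner_ket_xpx: "qinner (ket_xpx P x) \<psi> = (\<Sum>b\<in>UNIV. complex_of_real (sqrt (P x b)) * \<psi> (x, b))"
proof -
  have "qinner (ket_xpx P x) \<psi> =
      (\<Sum>a\<in>UNIV. if a = x then (\<Sum>b\<in>UNIV. complex_of_real (sqrt (P x b)) * \<psi> (a, b)) else 0)"
    unfolding qinner_def ket_xpx_def sum_UNIV_prod by (rule sum.cong) auto
  then show ?thesis by simp
qed

lemma qinner_ket_xpx_cnj: "qinner (ket_xpx P x) (\<lambda>i. cnj (\<psi> i)) = cnj (qinner (ket_xpx P x) \<psi>)"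
  unfolding qinner_ket_xpx by simp

lemma qinner_phi0_tilde_left:
  "qinner (phi0_tilde P st z) b = (\<Sum>x\<in>UNIV - {z}. complex_of_real (sqrt (st x)) * qinner (ket_xpx P x) b)"
  unfolding phi0_tilde_def qinner_sum_left by simp

definition proj_A_minus :: "('a::finite \<Rightarrow> 'a \<Rightarrow> real) \<Rightarrow> 'a \<Rightarrow> 'a qvec \<Rightarrow> 'a qvec" where
  "proj_A_minus P z \<psi> = (\<lambda>i. \<Sum>x\<in>UNIV - {z}. qinner (ket_xpx P x) \<psi> * ket_xpx P x i)"

lemma proj_A_minus_apply:
  "proj_A_minus P z \<psi> (b, a) =
     (if b \<noteq> z then qinner (ket_xpx P b) \<psi> * complex_of_real (sqrt (P b a)) else 0)"
  unfolding proj_A_minus_def by (simp add: ket_xpx_def if_distrib[of "\<lambda>t. _ * t"] cong: if_cong)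

lemma proj_A_minus_cnj: "proj_A_minus P z (\<lambda>i. cnj (\<psi> i)) = (\<lambda>i. cnj (proj_A_minus P z \<psi> i))"
  unfolding proj_A_minus_def qinner_ket_xpx_cnj by (simp add: cnj_ket_xpx)

locale stochastic =
  fixes P :: "'a::finite \<Rightarrow> 'a \<Rightarrow> real"
  assumes markov: "markov P"
begin

lemma nonneg: "0 \<le> P x y" and row_sum: "(\<Sum>y\<in>UNIV. P x y) = 1"
  using markov by (auto simp: markov_def)

lemma qinner_ket_xpx_ket_xpx: "qinner (ket_xpx P x) (ket_xpx P y) = (if x = y then 1 else 0)"
proof -
  have "qinner (ket_xpx P x) (ket_xpx P y) = (if x = y then (\<Sum>b\<in>UNIV. complex_of_real (P x b)) else 0)"
    unfolding qinner_ket_xpx by (auto simp: ket_xpx_def nonneg simp flip: of_real_mult)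
  then show ?thesis by (simp add: row_sum flip: of_real_sum)
qed

lemma qinner_ket_xpx_phi0_tilde:
  "y \<noteq> z \<Longrightarrow> qinner (ket_xpx P y) (phi0_tilde P st z) = complex_of_real (sqrt (st y))"
  unfolding phi0_tilde_def qinner_sum_right qinner_ket_xpx_ket_xpx
  by (simp add: if_distrib[of "\<lambda>t. _ * t"] cong: if_cong)

lemma qinner_ket_xpx_proj_A_minus:
  "x \<noteq> z \<Longrightarrow> qinner (ket_xpx P x) (proj_A_minus P z \<psi>) = qinner (ket_xpx P x) \<psi>"
  unfolding proj_A_minus_def qinner_sum_right qinner_ket_xpx_ket_xpx
  by (simp add: if_distrib[of "\<lambda>t. _ * t"] cong: if_cong)

lemma qinner_proj_A_minus_left:
  "qinner (proj_A_minus P z a) b = (\<Sum>x\<in>UNIV - {z}. cnj (qinner (ket_xpx P x) a) * qinner (ket_xpx P x) b)"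
  unfolding proj_A_minus_def qinner_sum_left ..

lemma qinner_proj_A_minus_right:
  "qinner a (proj_A_minus P z b) = (\<Sum>x\<in>UNIV - {z}. cnj (qinner (ket_xpx P x) a) * qinner (ket_xpx P x) b)"
  unfolding proj_A_minus_def qinner_sum_right by (simp add: qinner_commute[of a] mult.commute)

lemma qinner_proj_A_minus_proj_A_minus:
  "qinner (proj_A_minus P z a) (proj_A_minus P z b) =
     (\<Sum>x\<in>UNIV - {z}. cnj (qinner (ket_xpx P x) a) * qinner (ket_xpx P x) b)"
proof -
  have "qinner (proj_A_minus P z a) (proj_A_minus P z b) =
      (\<Sum>x\<in>UNIV - {z}. cnj (qinner (ket_xpx P x) a) * qinner (ket_xpx P x) (proj_A_minus P z b))"
    by (simp only: proj_A_minus_def[of P z a] qinner_sum_left)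
  also have "\<dots> = (\<Sum>x\<in>UNIV - {z}. cnj (qinner (ket_xpx P x) a) * qinner (ket_xpx P x) b)"
    by (rule sum.cong) (auto simp: qinner_ket_xpx_proj_A_minus)
  finally show ?thesis .
qed

text \<open>Since \<open>|\<mu>\<rangle>\<close> is a unit vector of \<open>\<A>\<close>, \<open>ref(\<A>)(I - 2|\<mu>\<rangle>\<langle>\<mu>|)\<close> is the reflection
  about \<open>\<A> \<inter> \<mu>\<^sup>\<bottom> = Span(|x\<rangle>|p\<^sub>x\<rangle> : x \<noteq> z)\<close>.\<close>
lemma Uop_eq_SWAP_reflection: "Uop P z \<psi> = SWAP (\<lambda>i. 2 * proj_A_minus P z \<psi> i - \<psi> i)"
proof -
  let ?m = "qinner (ket_xpx P z) \<psi>"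
  define D where "D = (\<lambda>i. \<psi> i - 2 * ?m * ket_xpx P z i)"
  have qD: "qinner (ket_xpx P x) D = qinner (ket_xpx P x) \<psi> - (if x = z then 2 * ?m else 0)" for x
    unfolding D_def qinner_diff_scale_right by (simp add: qinner_ket_xpx_ket_xpx)
  have proj: "proj_A P D i = proj_A_minus P z \<psi> i - ?m * ket_xpx P z i" for i
  proof -
    have "proj_A P D i = (\<Sum>x\<in>UNIV. qinner (ket_xpx P x) \<psi> * ket_xpx P x i) - 2 * ?m * ket_xpx P z i"
      unfolding proj_A_def qD
      by (simp add: left_diff_distrib sum_subtractf if_distrib[of "\<lambda>t. t * _"] cong: if_cong)
    also have "(\<Sum>x\<in>UNIV. qinner (ket_xpx P x) \<psi> * ket_xpx P x i) = ?m * ket_xpx P z i + proj_A_minus P z \<psi> i"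
      unfolding proj_A_minus_def by (simp add: sum.remove[of UNIV z])
    finally show ?thesis by simp
  qed
  have "ref_A P D = (\<lambda>i. 2 * proj_A_minus P z \<psi> i - \<psi> i)"
    unfolding ref_A_def proj by (rule ext) (simp add: D_def algebra_simps)
  then show ?thesis unfolding Uop_def U2_def D_def by simp
qed

lemma Uop_apply:
  "Uop P z \<psi> (a, b) =
     2 * (if b \<noteq> z then qinner (ket_xpx P b) \<psi> * complex_of_real (sqrt (P b a)) else 0) - \<psi> (b, a)"
  unfolding Uop_eq_SWAP_reflection SWAP_def proj_A_minus_apply by simp

lemma qinner_Uop_Uop: "qinner (Uop P z a) (Uop P z b) = qinner a b"
  unfolding Uop_eq_SWAP_reflection qinner_SWAP qinner_reflections qinner_proj_A_minus_proj_A_minus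
  unfolding qinner_proj_A_minus_left qinner_proj_A_minus_right by simp

lemma Uop_cnj: "Uop P z (\<lambda>i. cnj (\<psi> i)) = (\<lambda>i. cnj (Uop P z \<psi> i))"
  unfolding Uop_eq_SWAP_reflection proj_A_minus_cnj SWAP_def by (auto simp: fun_eq_iff)

lemma qinner_Uop_eigenvectors:
  assumes "Uop P z a = (\<lambda>i. l * a i)" "Uop P z b = (\<lambda>i. m * b i)"
    and "cmod l = 1" "l \<noteq> m"
  shows "qinner a b = 0"
proof -
  have "qinner a b = cnj l * m * qinner a b"
    using qinner_Uop_Uop[of z a b] assms(1,2) by (simp add: qinner_scale)
  moreover have "cnj l * m \<noteq> 1"
  proof
    assume "cnj l * m = 1"
    then have "l * (cnj l * m) = l" by simp
    moreover have "l * cnj l = 1" using assms(3) by (metis complex_norm_square of_real_1 power_one)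
    ultimately show False using assms(4) by (simp add: mult.assoc[symmetric])
  qed
  ultimately show ?thesis by (metis mult_cancel_right1)
qed

lemma Uop_eigenvector_incoming_amplitude:
  assumes eig: "Uop P z w = (\<lambda>i. l * w i)" and x: "x \<noteq> z"
  shows "l * (\<Sum>b\<in>UNIV. complex_of_real (sqrt (P x b)) * w (b, x)) = qinner (ket_xpx P x) w"
proof -
  let ?u = "qinner (ket_xpx P x) w"
  have E: "l * w (b, x) = 2 * ?u * complex_of_real (sqrt (P x b)) - w (x, b)" for b
    using Uop_apply[of z w b x] fun_cong[OF eig, of "(b, x)"] x by simp
  have "l * (\<Sum>b\<in>UNIV. complex_of_real (sqrt (P x b)) * w (b, x)) =
      (\<Sum>b\<in>UNIV. complex_of_real (sqrt (P x b)) * (l * w (b, x)))"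
    by (simp add: sum_distrib_left algebra_simps)
  also have "\<dots> = (\<Sum>b\<in>UNIV. complex_of_real (sqrt (P x b)) * (2 * ?u * complex_of_real (sqrt (P x b)) - w (x, b)))"
    by (simp only: E)
  also have "\<dots> = 2 * ?u * (\<Sum>b\<in>UNIV. complex_of_real (P x b))
      - (\<Sum>b\<in>UNIV. complex_of_real (sqrt (P x b)) * w (x, b))"
    by (simp add: sum_subtractf sum_distrib_left algebra_simps nonneg flip: of_real_mult)
  also have "(\<Sum>b\<in>UNIV. complex_of_real (sqrt (P x b)) * w (x, b)) = ?u"
    by (simp add: qinner_ket_xpx)
  also have "(\<Sum>b\<in>UNIV. complex_of_real (P x b)) = 1"
    by (simp add: row_sum flip: of_real_sum)
  finally show ?thesis by simp
qed

lemma Uop_eigenvector_outgoing_amplitude: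
  assumes eig: "Uop P z w = (\<lambda>i. l * w i)"
  shows "l * qinner (ket_xpx P x) w =
    2 * (\<Sum>y\<in>UNIV - {z}. complex_of_real (sqrt (P x y) * sqrt (P y x)) * qinner (ket_xpx P y) w)
    - (\<Sum>b\<in>UNIV. complex_of_real (sqrt (P x b)) * w (b, x))"
proof -
  have E: "l * w (x, b) =
      2 * (if b \<noteq> z then qinner (ket_xpx P b) w * complex_of_real (sqrt (P b x)) else 0) - w (b, x)" for b
    using Uop_apply[of z w x b] fun_cong[OF eig, of "(x, b)"] by simp
  have "l * qinner (ket_xpx P x) w = (\<Sum>b\<in>UNIV. complex_of_real (sqrt (P x b)) * (l * w (x, b)))"
    unfolding qinner_ket_xpx sum_distrib_left by (simp add: algebra_simps)
  also have "\<dots> = (\<Sum>b\<in>UNIV. complex_of_real (sqrt (P x b)) *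
      (2 * (if b \<noteq> z then qinner (ket_xpx P b) w * complex_of_real (sqrt (P b x)) else 0) - w (b, x)))"
    by (simp only: E)
  also have "\<dots> = 2 * (\<Sum>b\<in>UNIV. if b \<noteq> z then complex_of_real (sqrt (P x b) * sqrt (P b x)) * qinner (ket_xpx P b) w else 0)
      - (\<Sum>b\<in>UNIV. complex_of_real (sqrt (P x b)) * w (b, x))"
    by (simp add: sum_subtractf sum_distrib_left algebra_simps if_distrib[of "\<lambda>t. _ * t"] cong: if_cong)
  finally show ?thesis by (simp add: sum.remove[of UNIV z])
qed

text \<open>Szegedy's correspondence; for a reversible chain the coefficients are the entries of
  \<open>S\<^sub>-\<^sub>z\<close>, see \<open>Smat_eq\<close>.\<close>
lemma Uop_eigenvector_amplitudes:
  assumes eig: "Uop P z w = (\<lambda>i. l * w i)" and "l \<noteq> 0" and "x \<noteq> z"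
  shows "(\<Sum>y\<in>UNIV - {z}. complex_of_real (sqrt (P x y) * sqrt (P y x)) * qinner (ket_xpx P y) w) =
    ((l + 1 / l) / 2) * qinner (ket_xpx P x) w"
proof -
  let ?s = "\<Sum>b\<in>UNIV. complex_of_real (sqrt (P x b)) * w (b, x)"
  have "?s = qinner (ket_xpx P x) w / l"
    using Uop_eigenvector_incoming_amplitude[OF eig \<open>x \<noteq> z\<close>] \<open>l \<noteq> 0\<close> by (simp add: field_simps)
  with Uop_eigenvector_outgoing_amplitude[OF eig, of x] show ?thesis
    by (simp add: field_simps)
qed

end

section \<open>Reversible chains killed at \<open>z\<close>\<close>

context stochastic
begin

lemma max_abs_eigenfunction_spreads:
  assumes eig: "\<forall>x\<in>A. (\<Sum>y\<in>A. P x y * g y) = c * g x" and c: "\<bar>c\<bar> = 1"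
    and bound: "\<forall>y\<in>A. \<bar>g y\<bar> \<le> M" and M: "0 < M"
    and x: "x \<in> A" "\<bar>g x\<bar> = M" and step: "0 < P x y"
  shows "y \<in> A \<and> \<bar>g y\<bar> = M"
proof -
  define h where "h y = P x y * (M - (if y \<in> A then \<bar>g y\<bar> else 0))" for y
  have h_nonneg: "0 \<le> h y" for y
    using bound M by (auto simp: h_def nonneg)
  have "M = \<bar>\<Sum>y\<in>A. P x y * g y\<bar>"
    using eig x c by (simp add: abs_mult)
  also have "\<dots> \<le> (\<Sum>y\<in>A. P x y * \<bar>g y\<bar>)"
    by (rule order_trans[OF sum_abs]) (simp add: abs_mult nonneg)
  also have "\<dots> = (\<Sum>y\<in>UNIV. P x y * (if y \<in> A then \<bar>g y\<bar> else 0))"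
    by (simp add: if_distrib[of "\<lambda>t. _ * t"] sum.If_cases)
  finally have "(\<Sum>y\<in>UNIV. h y) \<le> 0"
    by (simp add: h_def right_diff_distrib sum_subtractf row_sum flip: sum_distrib_right)
  then have "h y = 0"
    using h_nonneg sum_nonneg_eq_0_iff[of UNIV h] by (simp add: order_antisym sum_nonneg)
  then show ?thesis
    using step M by (auto simp: h_def split: if_splits)
qed

lemma max_abs_eigenfunction_reachable:
  assumes eig: "\<forall>x\<in>A. (\<Sum>y\<in>A. P x y * g y) = c * g x" and c: "\<bar>c\<bar> = 1"
    and bound: "\<forall>y\<in>A. \<bar>g y\<bar> \<le> M" and M: "0 < M"
    and x0: "x0 \<in> A" "\<bar>g x0\<bar> = M"
  shows "0 < mpow P t x0 y \<Longrightarrow> y \<in> A \<and> \<bar>g y\<bar> = M"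
proof (induction t arbitrary: y)
  case 0
  then show ?case using x0 by (simp split: if_splits)
next
  case (Suc t)
  then have "\<not> (\<forall>w. mpow P t x0 w * P w y \<le> 0)"
    by (auto simp: not_le[symmetric] intro: sum_nonpos)
  then obtain w where "0 < mpow P t x0 w * P w y"
    by (auto simp: not_le)
  moreover have "0 \<le> mpow P t x0 w" "0 \<le> P w y"
    using rpow_nonneg[of P] nonneg by auto
  ultimately have "0 < mpow P t x0 w" "0 < P w y"
    by (auto simp: zero_less_mult_iff)
  with Suc.IH max_abs_eigenfunction_spreads[OF eig c bound M] show ?case by blast
qed

end

locale irreducible_reversible_chain = stochastic +
  fixes st :: "'a::finite \<Rightarrow> real"
  assumes stationary: "stationary_distr P st" and reversible: "reversible_chain P st"
    and irreducible: "irreducible_chain P"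
begin

lemma st_nonneg: "0 \<le> st x" and st_sum: "(\<Sum>x\<in>UNIV. st x) = 1"
  and st_invariant: "(\<Sum>x\<in>UNIV. st x * P x y) = st y"
  using stationary by (auto simp: stationary_distr_def)

lemma st_mpow: "(\<Sum>x\<in>UNIV. st x * mpow P t x y) = st y"
proof (induction t arbitrary: y)
  case 0
  then show ?case by (simp add: if_distrib[of "\<lambda>t. _ * t"] cong: if_cong)
next
  case (Suc t)
  have "(\<Sum>x\<in>UNIV. st x * mpow P (Suc t) x y) = (\<Sum>w\<in>UNIV. (\<Sum>x\<in>UNIV. st x * mpow P t x w) * P w y)"
    unfolding rpow.simps sum_distrib_left sum_distrib_right mult.assoc by (rule sum.swap)
  then show ?case by (simp add: Suc st_invariant)
qed

lemma st_pos: "0 < st y"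
proof -
  have "\<not> (\<forall>x. st x \<le> 0)"
    using st_sum sum_nonpos[of UNIV st] by auto
  then obtain x where x: "0 < st x"
    by (auto simp: not_le)
  obtain t where t: "0 < mpow P t x y"
    using irreducible unfolding irreducible_chain_def by blast
  have "st x * mpow P t x y \<le> (\<Sum>x\<in>UNIV. st x * mpow P t x y)"
    by (rule member_le_sum) (auto intro!: mult_nonneg_nonneg st_nonneg rpow_nonneg nonneg)
  then show ?thesis using st_mpow[of t y] mult_pos_pos[OF x t] by linarith
qed

lemma Smat_eq: "Smat P st x y = sqrt (P x y) * sqrt (P y x)"
proof -
  have "st x * P x y = st y * P y x"
    using reversible by (simp add: reversible_chain_def)
  then have "P y x = st x * P x y / st y"
    using st_pos[of y] by (simp add: field_simps)
  then have "sqrt (P x y) * sqrt (P y x) = sqrt (P x y * P x y) * sqrt (st x) / sqrt (st y)"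
    by (simp add: real_sqrt_mult real_sqrt_divide)
  then show ?thesis unfolding Smat_def by (simp add: nonneg)
qed

lemma Smat_sym: "Smat P st x y = Smat P st y x"
  unfolding Smat_eq by simp

lemma rpow_Smat: "rpow A (Smat P st) t x y = sqrt (st x) * rpow A P t x y / sqrt (st y)"
proof (induction t arbitrary: y)
  case 0
  then show ?case using st_pos[of x] by auto
next
  case (Suc t)
  have "sqrt (st w) \<noteq> 0" for w using st_pos[of w] by simp
  then have "rpow A (Smat P st) (Suc t) x y = (\<Sum>w\<in>A. sqrt (st x) * (rpow A P t x w * P w y) / sqrt (st y))"
    by (simp add: Suc Smat_def)
  then show ?case by (simp add: sum_distrib_left sum_divide_distrib)
qed

lemma not_hit_prob_Smat:
  "not_hit_prob P st z t =
     (\<Sum>x\<in>UNIV - {z}. \<Sum>y\<in>UNIV - {z}. sqrt (st x) * rpow (UNIV - {z}) (Smat P st) t x y * sqrt (st y))"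
  unfolding not_hit_prob_def rpow_Smat
proof (intro sum.cong refl)
  fix x y
  have "sqrt (st y) \<noteq> 0" using st_pos[of y] by simp
  then show "st x * rpow (UNIV - {z}) P t x y =
      sqrt (st x) * (sqrt (st x) * rpow (UNIV - {z}) P t x y / sqrt (st y)) * sqrt (st y)"
    by (simp add: st_nonneg)
qed

lemma not_hit_prob_0_le: "not_hit_prob P st z 0 \<le> 1"
proof -
  have "not_hit_prob P st z 0 = (\<Sum>x\<in>UNIV - {z}. st x)"
    unfolding not_hit_prob_def by (simp add: if_distrib[of "\<lambda>t. _ * t"] cong: if_cong)
  also have "\<dots> \<le> (\<Sum>x\<in>UNIV. st x)"
    by (rule sum_mono2) (auto simp: st_nonneg)
  finally show ?thesis using st_sum by simp
qed

text \<open>Perron--Frobenius for the killed chain: the set where a unimodular eigenfunction of \<open>P\<^sub>-\<^sub>z\<close>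
  attains its maximal modulus is closed under transitions and avoids \<open>z\<close>, which irreducibility forbids.\<close>
lemma Smat_no_unimodular_eigenvalue:
  assumes eig: "\<forall>x\<in>UNIV - {z}. (\<Sum>y\<in>UNIV - {z}. Smat P st x y * f y) = c * f x"
    and c: "\<bar>c\<bar> = 1" and x: "x \<noteq> z"
  shows "f x = 0"
proof (rule ccontr)
  assume fx: "f x \<noteq> 0"
  define A where "A = UNIV - {z}"
  define g where "g y = f y / sqrt (st y)" for y
  have sqrt_pos: "0 < sqrt (st y)" for y using st_pos[of y] by simp
  have geig: "\<forall>x\<in>A. (\<Sum>y\<in>A. P x y * g y) = c * g x"
  proof
    fix x assume "x \<in> A"
    have "(\<Sum>y\<in>A. Smat P st x y * f y) = sqrt (st x) * (\<Sum>y\<in>A. P x y * g y)"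
      unfolding Smat_def g_def sum_distrib_left by (rule sum.cong) (auto simp: field_simps)
    with eig \<open>x \<in> A\<close> sqrt_pos[of x] show "(\<Sum>y\<in>A. P x y * g y) = c * g x"
      unfolding A_def g_def by (simp add: field_simps)
  qed
  define M where "M = Max ((\<lambda>y. \<bar>g y\<bar>) ` A)"
  have bound: "\<forall>y\<in>A. \<bar>g y\<bar> \<le> M"
    unfolding M_def by simp
  obtain x0 where x0: "x0 \<in> A" "\<bar>g x0\<bar> = M"
    using Max_in[of "(\<lambda>y. \<bar>g y\<bar>) ` A"] x unfolding M_def A_def by fastforce
  have "\<bar>g x\<bar> \<le> M" using bound x unfolding A_def by simp
  moreover have "g x \<noteq> 0" using fx sqrt_pos[of x] unfolding g_def by simp
  ultimately have "0 < M" by linarith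
  obtain t where "0 < mpow P t x0 z"
    using irreducible unfolding irreducible_chain_def by blast
  from max_abs_eigenfunction_reachable[OF geig c bound \<open>0 < M\<close> x0 this] show False
    unfolding A_def by simp
qed

lemma Uop_unimodular_eigenvector_amplitude:
  assumes eig: "Uop P z v = (\<lambda>i. complex_of_real c * v i)" and c: "\<bar>c\<bar> = 1" and y: "y \<noteq> z"
  shows "qinner (ket_xpx P y) v = 0"
proof -
  have "(complex_of_real c + 1 / complex_of_real c) / 2 = complex_of_real c"
    using c by (auto simp: abs_if split: if_splits)
  then have E: "(\<Sum>y\<in>UNIV - {z}. complex_of_real (Smat P st x y) * qinner (ket_xpx P y) v) =
      complex_of_real c * qinner (ket_xpx P x) v" if "x \<noteq> z" for x
    using Uop_eigenvector_amplitudes[OF eig _ that] c unfolding Smat_eq by auto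
  have "(\<Sum>y\<in>UNIV - {z}. Smat P st x y * Re (qinner (ket_xpx P y) v)) = c * Re (qinner (ket_xpx P x) v)"
    "(\<Sum>y\<in>UNIV - {z}. Smat P st x y * Im (qinner (ket_xpx P y) v)) = c * Im (qinner (ket_xpx P x) v)"
    if "x \<noteq> z" for x
    using arg_cong[OF E[OF that], of Re] arg_cong[OF E[OF that], of Im] by (simp_all add: Re_sum Im_sum)
  then have "Re (qinner (ket_xpx P y) v) = 0" "Im (qinner (ket_xpx P y) v) = 0"
    using Smat_no_unimodular_eigenvalue[OF _ c y, of "\<lambda>y. Re (qinner (ket_xpx P y) v)"]
      Smat_no_unimodular_eigenvalue[OF _ c y, of "\<lambda>y. Im (qinner (ket_xpx P y) v)"] by auto
  then show ?thesis by (simp add: complex_eq_iff)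
qed

end

section \<open>Spectral decomposition of \<open>|\<phi>\<^sub>0\<rangle>\<close>\<close>

locale walk_decomposition = irreducible_reversible_chain +
  fixes z :: "'a::finite" and J :: "nat set" and \<alpha> :: "nat \<Rightarrow> real" and w :: "nat \<Rightarrow> 'a qvec"
    and \<delta> :: "nat \<Rightarrow> real" and c0 cm :: "'a qvec"
  assumes decomposition: "quantum_spectral_data P st z J \<alpha> w \<delta> c0 cm"
begin

lemma finite_J: "finite J"
  and \<alpha>_range: "j \<in> J \<Longrightarrow> 0 < \<alpha> j \<and> \<alpha> j < pi"
  and w_eigen: "j \<in> J \<Longrightarrow> Uop P z (w j) = (\<lambda>i. cis (\<alpha> j) * w j i)"
  and w_orthonormal: "j \<in> J \<Longrightarrow> k \<in> J \<Longrightarrow> qinner (w j) (w k) = (if j = k then 1 else 0)"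
  and w_cnj_orthogonal: "j \<in> J \<Longrightarrow> k \<in> J \<Longrightarrow> qinner (w j) (\<lambda>i. cnj (w k i)) = 0"
  and c0_eigen: "Uop P z c0 = c0"
  and cm_eigen: "Uop P z cm = (\<lambda>i. - cm i)"
  and phi0_tilde_eq:
    "phi0_tilde P st z = (\<lambda>i. c0 i + (\<Sum>j\<in>J. complex_of_real (\<delta> j) * (w j i + cnj (w j i))) + cm i)"
  using decomposition unfolding quantum_spectral_data_def by auto

lemma sin_\<alpha>_pos: "j \<in> J \<Longrightarrow> 0 < sin (\<alpha> j)"
  using \<alpha>_range sin_gt_zero by blast

lemma w_cnj_eigen: "j \<in> J \<Longrightarrow> Uop P z (\<lambda>i. cnj (w j i)) = (\<lambda>i. cis (- \<alpha> j) * cnj (w j i))"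
  using Uop_cnj[of z "w j"] w_eigen[of j] by (simp add: cis_cnj)

lemma c0_amplitude: "y \<noteq> z \<Longrightarrow> qinner (ket_xpx P y) c0 = 0"
  using Uop_unimodular_eigenvector_amplitude[where v=c0 and c=1] c0_eigen by simp

lemma cm_amplitude: "y \<noteq> z \<Longrightarrow> qinner (ket_xpx P y) cm = 0"
  using Uop_unimodular_eigenvector_amplitude[where v=cm and c="-1"] cm_eigen by simp

lemma qinner_c0_w: "k \<in> J \<Longrightarrow> qinner c0 (w k) = 0"
  by (rule qinner_Uop_eigenvectors[of z _ 1 _ "cis (\<alpha> k)"])
    (use c0_eigen w_eigen sin_\<alpha>_pos[of k] in \<open>auto simp: complex_eq_iff\<close>)

lemma qinner_cm_w: "k \<in> J \<Longrightarrow> qinner cm (w k) = 0"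
  by (rule qinner_Uop_eigenvectors[of z _ "-1" _ "cis (\<alpha> k)"])
    (use cm_eigen w_eigen sin_\<alpha>_pos[of k] in \<open>auto simp: complex_eq_iff\<close>)

lemma qinner_cnj_w_cm: "k \<in> J \<Longrightarrow> qinner (\<lambda>i. cnj (w k i)) cm = 0"
  by (rule qinner_Uop_eigenvectors[of z _ "cis (- \<alpha> k)" _ "-1"])
    (use cm_eigen w_cnj_eigen sin_\<alpha>_pos[of k] in \<open>auto simp: complex_eq_iff\<close>)

text \<open>Only real parts of the amplitudes of \<open>w\<^sub>k\<close> matter, since \<open>|\<phi>\<^sub>0\<rangle>\<close> contains \<open>w\<^sub>k\<close> together
  with its conjugate.\<close>
definition amp :: "nat \<Rightarrow> 'a \<Rightarrow> real" where
  "amp k y = Re (qinner (ket_xpx P y) (w k))"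

lemma amp_eigen:
  assumes k: "k \<in> J"
  shows "\<forall>x\<in>UNIV - {z}. (\<Sum>y\<in>UNIV - {z}. Smat P st x y * amp k y) = cos (\<alpha> k) * amp k x"
proof
  fix x assume "x \<in> UNIV - {z}"
  then have "(\<Sum>y\<in>UNIV - {z}. complex_of_real (Smat P st x y) * qinner (ket_xpx P y) (w k)) =
      ((cis (\<alpha> k) + 1 / cis (\<alpha> k)) / 2) * qinner (ket_xpx P x) (w k)"
    using Uop_eigenvector_amplitudes[OF w_eigen[OF k]] unfolding Smat_eq by simp
  also have "(cis (\<alpha> k) + 1 / cis (\<alpha> k)) / 2 = complex_of_real (cos (\<alpha> k))"
    by (simp add: complex_eq_iff flip: inverse_eq_divide)
  finally have "(\<Sum>y\<in>UNIV - {z}. complex_of_real (Smat P st x y) * qinner (ket_xpx P y) (w k)) =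
      complex_of_real (cos (\<alpha> k)) * qinner (ket_xpx P x) (w k)" .
  from arg_cong[OF this, of Re] show "(\<Sum>y\<in>UNIV - {z}. Smat P st x y * amp k y) = cos (\<alpha> k) * amp k x"
    unfolding amp_def by (simp add: Re_sum)
qed

lemma sqrt_st_expansion: "y \<noteq> z \<Longrightarrow> sqrt (st y) = (\<Sum>k\<in>J. 2 * \<delta> k * amp k y)"
proof -
  assume y: "y \<noteq> z"
  have "complex_of_real (sqrt (st y)) =
      (\<Sum>k\<in>J. complex_of_real (\<delta> k) * (qinner (ket_xpx P y) (w k) + cnj (qinner (ket_xpx P y) (w k))))"
    using qinner_ket_xpx_phi0_tilde[OF y, where st=st] c0_amplitude[OF y] cm_amplitude[OF y]
    unfolding phi0_tilde_eq qinner_add_right qinner_sum_right qinner_ket_xpx_cnj by simp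
  from arg_cong[OF this, of Re] show ?thesis
    unfolding amp_def by (simp add: algebra_simps)
qed

lemma amp_inner_sqrt_st: "k \<in> J \<Longrightarrow> (\<Sum>x\<in>UNIV - {z}. sqrt (st x) * amp k x) = \<delta> k"
proof -
  assume k: "k \<in> J"
  have "qinner (\<lambda>i. cnj (w j i)) (w k) = 0" if "j \<in> J" for j
    using w_cnj_orthogonal[OF k that] qinner_commute[of "\<lambda>i. cnj (w j i)" "w k"] by simp
  then have "qinner (phi0_tilde P st z) (w k) = (\<Sum>j\<in>J. complex_of_real (\<delta> j) * (if j = k then 1 else 0))"
    unfolding phi0_tilde_eq qinner_add_left qinner_sum_left qinner_c0_w[OF k] qinner_cm_w[OF k]
    by (simp add: w_orthonormal k cong: sum.cong)
  also have "\<dots> = complex_of_real (\<delta> k)"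
    using k finite_J by (simp add: if_distrib[of "\<lambda>t. _ * t"] cong: if_cong)
  finally have "(\<Sum>x\<in>UNIV - {z}. complex_of_real (sqrt (st x)) * qinner (ket_xpx P x) (w k)) = complex_of_real (\<delta> k)"
    unfolding qinner_phi0_tilde_left .
  from arg_cong[OF this, of Re] show ?thesis
    unfolding amp_def by (simp add: Re_sum)
qed

lemma qnorm2_cm: "qnorm2 cm = 0"
proof -
  have "qinner c0 cm = 0"
    by (rule qinner_Uop_eigenvectors[of z _ 1 _ "-1"]) (simp_all add: c0_eigen cm_eigen)
  moreover have "qinner (w k) cm = 0" if "k \<in> J" for k
    using qinner_cm_w[OF that] qinner_commute[of cm "w k"] by simp
  ultimately have "qinner (phi0_tilde P st z) cm = qinner cm cm"
    unfolding phi0_tilde_eq qinner_add_left qinner_sum_left by (simp add: qinner_cnj_w_cm)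
  moreover have "qinner (phi0_tilde P st z) cm = 0"
    unfolding qinner_phi0_tilde_left by (simp add: cm_amplitude)
  ultimately show ?thesis by (simp add: qinner_self)
qed

lemma rpow_Smat_sqrt_st:
  assumes "x \<noteq> z"
  shows "(\<Sum>y\<in>UNIV - {z}. rpow (UNIV - {z}) (Smat P st) t x y * sqrt (st y)) =
    (\<Sum>k\<in>J. 2 * \<delta> k * cos (\<alpha> k) ^ t * amp k x)"
proof -
  have "(\<Sum>y\<in>UNIV - {z}. rpow (UNIV - {z}) (Smat P st) t x y * sqrt (st y)) =
      (\<Sum>k\<in>J. 2 * \<delta> k * (\<Sum>y\<in>UNIV - {z}. rpow (UNIV - {z}) (Smat P st) t x y * amp k y))"
    by (simp add: sqrt_st_expansion sum_distrib_left sum.swap[of _ J] algebra_simps)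
  also have "\<dots> = (\<Sum>k\<in>J. 2 * \<delta> k * cos (\<alpha> k) ^ t * amp k x)"
    using assms by (intro sum.cong) (auto simp: rpow_eigenvector[OF amp_eigen])
  finally show ?thesis .
qed

lemma not_hit_prob_eq: "not_hit_prob P st z t = (\<Sum>k\<in>J. 2 * (\<delta> k)\<^sup>2 * cos (\<alpha> k) ^ t)"
proof -
  have "not_hit_prob P st z t =
      (\<Sum>x\<in>UNIV - {z}. \<Sum>k\<in>J. 2 * \<delta> k * cos (\<alpha> k) ^ t * (sqrt (st x) * amp k x))"
    unfolding not_hit_prob_Smat
    by (intro sum.cong refl)
      (simp add: mult.assoc rpow_Smat_sqrt_st flip: sum_distrib_left, simp add: sum_distrib_left algebra_simps)
  also have "\<dots> = (\<Sum>k\<in>J. 2 * \<delta> k * cos (\<alpha> k) ^ t * (\<Sum>x\<in>UNIV - {z}. sqrt (st x) * amp k x))"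
    by (subst sum.swap) (simp add: sum_distrib_left)
  finally show ?thesis
    by (simp add: amp_inner_sqrt_st power2_eq_square mult_ac cong: sum.cong)
qed

lemma HT_eq: "HT P st z = (\<Sum>k\<in>J. 2 * (\<delta> k)\<^sup>2 / (1 - cos (\<alpha> k)))"
proof -
  have "(\<lambda>t. \<Sum>k\<in>J. 2 * (\<delta> k)\<^sup>2 * cos (\<alpha> k) ^ t) sums (\<Sum>k\<in>J. 2 * (\<delta> k)\<^sup>2 * (1 / (1 - cos (\<alpha> k))))"
  proof (rule sums_sum, rule sums_mult)
    fix k assume "k \<in> J"
    then have "0 < \<alpha> k" "\<alpha> k < pi" using \<alpha>_range by auto
    then have "\<bar>cos (\<alpha> k)\<bar> < 1"
      using cos_monotone_0_pi[of 0 "\<alpha> k"] cos_monotone_0_pi[of "\<alpha> k" pi] by (simp add: abs_less_iff)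
    then show "(\<lambda>t. cos (\<alpha> k) ^ t) sums (1 / (1 - cos (\<alpha> k)))"
      using geometric_sums[of "cos (\<alpha> k)"] by simp
  qed
  then show ?thesis
    unfolding HT_def not_hit_prob_eq by (simp add: sums_unique[symmetric])
qed

lemma weights_sum_le_1: "(\<Sum>k\<in>J. 2 * (\<delta> k)\<^sup>2) \<le> 1"
  using not_hit_prob_0_le[of z] not_hit_prob_eq[of 0] by simp

lemma QHT_eq: "QHT J \<alpha> \<delta> cm = (\<Sum>k\<in>J. 2 * (\<delta> k)\<^sup>2 / \<alpha> k)"
  unfolding QHT_def qnorm2_cm by simp

lemma QH_tail_neg: "y < 0 \<Longrightarrow> QH_tail J \<alpha> \<delta> cm y = 1"
proof -
  assume y: "y < 0"
  then have "{k \<in> J. y < 1 / \<alpha> k} = J"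
    using \<alpha>_range by (auto intro: less_trans[of y 0])
  moreover have "y < 1 / pi"
    using y pi_gt_zero by (meson divide_pos_pos less_trans zero_less_one)
  ultimately show ?thesis
    unfolding QH_tail_def using y by simp
qed

lemma QHT_le: "QHT J \<alpha> \<delta> cm \<le> sqrt (HT P st z / 2)"
proof (rule real_le_rsqrt)
  have "(QHT J \<alpha> \<delta> cm)\<^sup>2 = (\<Sum>k\<in>J. 2 * (\<delta> k)\<^sup>2 * (1 / \<alpha> k))\<^sup>2"
    unfolding QHT_eq by simp
  also have "\<dots> \<le> (\<Sum>k\<in>J. 2 * (\<delta> k)\<^sup>2 * (1 / \<alpha> k)\<^sup>2)"
    by (rule square_weighted_sum_le) (simp_all add: weights_sum_le_1)
  also have "\<dots> \<le> (\<Sum>k\<in>J. 2 * (\<delta> k)\<^sup>2 * (1 / (2 * (1 - cos (\<alpha> k)))))"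
  proof (intro sum_mono mult_left_mono)
    fix k assume "k \<in> J"
    then show "(1 / \<alpha> k)\<^sup>2 \<le> 1 / (2 * (1 - cos (\<alpha> k)))"
      using \<alpha>_range inverse_square_le_inverse_one_minus_cos[of "\<alpha> k"] by (simp add: power_one_over)
  qed simp
  also have "\<dots> = HT P st z / 2"
    unfolding HT_eq by (simp add: sum_divide_distrib mult.commute)
  finally show "(QHT J \<alpha> \<delta> cm)\<^sup>2 \<le> HT P st z / 2" .
qed

end

section \<open>Comparison with the classical spectrum\<close>

locale spectral_correspondence = walk_decomposition +
  fixes Jc :: "nat set" and v :: "nat \<Rightarrow> 'a \<Rightarrow> real" and \<theta> :: "nat \<Rightarrow> real"
  assumes classical: "classical_spectral_data P st z Jc v \<theta>"
begin

lemma finite_Jc: "finite Jc"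
  and card_Jc: "card Jc = card (UNIV - {z})"
  and v_orthonormal: "\<forall>j\<in>Jc. \<forall>k\<in>Jc. (\<Sum>x\<in>UNIV - {z}. v j x * v k x) = (if j = k then 1 else 0)"
  and v_eigen: "j \<in> Jc \<Longrightarrow> x \<noteq> z \<Longrightarrow> (\<Sum>y\<in>UNIV - {z}. Smat P st x y * v j y) = cos (\<theta> j) * v j x"
  and \<theta>_range: "j \<in> Jc \<Longrightarrow> 0 < \<theta> j \<and> \<theta> j \<le> pi / 2"
  using classical unfolding classical_spectral_data_def by (auto simp: card_Diff_singleton)

lemma v_complete:
  "x \<noteq> z \<Longrightarrow> y \<noteq> z \<Longrightarrow> (\<Sum>j\<in>Jc. v j x * v j y) = (if x = y then 1 else 0)"
  using orthonormal_family_complete[OF finite_Jc card_Jc v_orthonormal] by simp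

definition overlap :: "nat \<Rightarrow> nat \<Rightarrow> real" where
  "overlap j k = (\<Sum>x\<in>UNIV - {z}. v j x * amp k x)"

lemma overlap_eq_0:
  assumes j: "j \<in> Jc" and k: "k \<in> J" and "\<theta> j \<noteq> \<alpha> k"
  shows "overlap j k = 0"
proof -
  have "cos (\<theta> j) * overlap j k = (\<Sum>x\<in>UNIV - {z}. (\<Sum>y\<in>UNIV - {z}. Smat P st x y * v j y) * amp k x)"
    unfolding overlap_def sum_distrib_left by (rule sum.cong) (simp_all add: v_eigen[OF j])
  also have "\<dots> = (\<Sum>y\<in>UNIV - {z}. v j y * (\<Sum>x\<in>UNIV - {z}. Smat P st y x * amp k x))"
    unfolding sum_distrib_left sum_distrib_right
    by (subst sum.swap) (simp add: Smat_sym[of _ y for y] algebra_simps)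
  also have "\<dots> = (\<Sum>y\<in>UNIV - {z}. v j y * (cos (\<alpha> k) * amp k y))"
    using amp_eigen[OF k] by (intro sum.cong) auto
  also have "\<dots> = cos (\<alpha> k) * overlap j k"
    unfolding overlap_def sum_distrib_left by (simp add: algebra_simps)
  finally have "(cos (\<theta> j) - cos (\<alpha> k)) * overlap j k = 0"
    by (simp add: algebra_simps)
  moreover have "cos (\<theta> j) \<noteq> cos (\<alpha> k)"
    using cos_inj_pi[of "\<theta> j" "\<alpha> k"] \<theta>_range[OF j] \<alpha>_range[OF k] \<open>\<theta> j \<noteq> \<alpha> k\<close> by auto
  ultimately show ?thesis by simp
qed

lemma nu_coef_expansion: "nu_coef st z v j = (\<Sum>k\<in>J. 2 * \<delta> k * overlap j k)"
proof -
  have "nu_coef st z v j = (\<Sum>x\<in>UNIV - {z}. (\<Sum>k\<in>J. 2 * \<delta> k * amp k x) * v j x)"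
    unfolding nu_coef_def by (rule sum.cong) (simp_all add: sqrt_st_expansion)
  then show ?thesis
    unfolding overlap_def sum_distrib_right sum_distrib_left
    by (subst (asm) sum.swap) (simp add: algebra_simps)
qed

lemma \<delta>_expansion: "k \<in> J \<Longrightarrow> \<delta> k = (\<Sum>j\<in>Jc. overlap j k * nu_coef st z v j)"
proof -
  assume k: "k \<in> J"
  have amp: "amp k x = (\<Sum>j\<in>Jc. overlap j k * v j x)" if "x \<noteq> z" for x
  proof -
    have "(\<Sum>j\<in>Jc. overlap j k * v j x) = (\<Sum>y\<in>UNIV - {z}. amp k y * (\<Sum>j\<in>Jc. v j x * v j y))"
      unfolding overlap_def sum_distrib_right sum_distrib_left
      by (subst sum.swap) (simp add: algebra_simps)
    also have "\<dots> = amp k x"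
      using that by (simp add: v_complete if_distrib[of "\<lambda>t. _ * t"] cong: if_cong)
    finally show ?thesis by simp
  qed
  have "\<delta> k = (\<Sum>x\<in>UNIV - {z}. sqrt (st x) * (\<Sum>j\<in>Jc. overlap j k * v j x))"
    unfolding amp_inner_sqrt_st[OF k, symmetric] by (rule sum.cong) (simp_all add: amp)
  then show ?thesis
    unfolding nu_coef_def sum_distrib_left by (subst (asm) sum.swap) (simp add: algebra_simps)
qed

text \<open>The spectral measure of \<open>\<surd>\<pi>\<^sub>-\<^sub>z\<close> for \<open>S\<^sub>-\<^sub>z\<close> is the law of the phases \<open>\<alpha>\<^sub>k\<close>
  weighted by \<open>2\<delta>\<^sub>k\<^sup>2\<close>.\<close>
lemma spectral_mass_eq:
  "(\<Sum>j\<in>{j\<in>Jc. Q (\<theta> j)}. (nu_coef st z v j)\<^sup>2) = (\<Sum>k\<in>{k\<in>J. Q (\<alpha> k)}. 2 * (\<delta> k)\<^sup>2)"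
proof -
  have swap_angle: "(if Q (\<theta> j) then overlap j k else 0) = (if Q (\<alpha> k) then overlap j k else 0)"
    if "j \<in> Jc" "k \<in> J" for j k
    using overlap_eq_0[OF that] by (cases "\<theta> j = \<alpha> k") auto
  have "(\<Sum>j\<in>{j\<in>Jc. Q (\<theta> j)}. (nu_coef st z v j)\<^sup>2) =
      (\<Sum>j\<in>Jc. if Q (\<theta> j) then nu_coef st z v j * nu_coef st z v j else 0)"
    by (simp add: sum.inter_filter finite_Jc power2_eq_square)
  also have "\<dots> = (\<Sum>j\<in>Jc. \<Sum>k\<in>J. nu_coef st z v j * 2 * \<delta> k * (if Q (\<theta> j) then overlap j k else 0))"
    by (rule sum.cong) (auto simp: nu_coef_expansion[of j for j] sum_distrib_left algebra_simps)
  also have "\<dots> = (\<Sum>j\<in>Jc. \<Sum>k\<in>J. nu_coef st z v j * 2 * \<delta> k * (if Q (\<alpha> k) then overlap j k else 0))"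
    by (intro sum.cong refl) (simp add: swap_angle)
  also have "\<dots> = (\<Sum>k\<in>J. if Q (\<alpha> k) then 2 * \<delta> k * (\<Sum>j\<in>Jc. overlap j k * nu_coef st z v j) else 0)"
    by (subst sum.swap) (auto simp: sum_distrib_left algebra_simps intro!: sum.cong)
  also have "\<dots> = (\<Sum>k\<in>{k\<in>J. Q (\<alpha> k)}. 2 * (\<delta> k)\<^sup>2)"
    by (simp add: sum.inter_filter finite_J \<delta>_expansion[symmetric] power2_eq_square mult.assoc cong: if_cong)
  finally show ?thesis .
qed

lemma H_tail_neg: "y < 0 \<Longrightarrow> H_tail st z Jc v \<theta> y = 1"
proof -
  assume y: "y < 0"
  have "y < 1 / (\<theta> j)\<^sup>2" if "j \<in> Jc" for j
  proof -
    have "0 < 1 / (\<theta> j)\<^sup>2" using \<theta>_range[OF that] by simp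
    with y show ?thesis by linarith
  qed
  then have "{j \<in> Jc. y < 1 / (\<theta> j)\<^sup>2} = Jc" by auto
  then show ?thesis
    unfolding H_tail_def using y by simp
qed

lemma QH_tail_eq_H_tail:
  assumes y: "0 \<le> y"
  shows "QH_tail J \<alpha> \<delta> cm y = H_tail st z Jc v \<theta> (y\<^sup>2)"
proof -
  have "{j\<in>Jc. y < 1 / \<theta> j} = {j\<in>Jc. y\<^sup>2 < 1 / (\<theta> j)\<^sup>2}"
  proof (intro Collect_cong conj_cong refl)
    fix j assume "j \<in> Jc"
    then have "0 < \<theta> j" using \<theta>_range by simp
    then have "0 \<le> 1 / \<theta> j" by simp
    with y have "(y < 1 / \<theta> j) = (y\<^sup>2 < (1 / \<theta> j)\<^sup>2)"
      by (meson power_less_imp_less_base power_strict_mono zero_less_numeral)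
    then show "(y < 1 / \<theta> j) = (y\<^sup>2 < 1 / (\<theta> j)\<^sup>2)" by (simp add: power_divide)
  qed
  moreover have "QH_tail J \<alpha> \<delta> cm y = (\<Sum>k\<in>{k\<in>J. y < 1 / \<alpha> k}. 2 * (\<delta> k)\<^sup>2)"
    unfolding QH_tail_def qnorm2_cm using y by simp
  ultimately show ?thesis
    unfolding H_tail_def using spectral_mass_eq[of "\<lambda>b. y < 1 / b"] y by simp
qed

lemma QHT_eps_eq:
  assumes "0 < \<epsilon>" "\<epsilon> < 1"
  shows "QHT_eps J \<alpha> \<delta> cm \<epsilon> = sqrt (HT_eps st z Jc v \<theta> \<epsilon>)"
proof -
  have H_neg: "\<not> H_tail st z Jc v \<theta> y \<le> \<epsilon>" if "y < 0" for y
    using H_tail_neg[OF that] assms by simp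
  have H_nonneg: "H_tail st z Jc v \<theta> y = (\<Sum>j\<in>{j\<in>Jc. y < 1 / (\<theta> j)\<^sup>2}. (nu_coef st z v j)\<^sup>2)"
    if "0 \<le> y" for y
    using that by (simp add: H_tail_def)
  have QH_neg: "\<not> QH_tail J \<alpha> \<delta> cm y \<le> \<epsilon>" if "y < 0" for y
    using QH_tail_neg[OF that] assms by simp
  obtain y0 where "H_tail st z Jc v \<theta> y0 \<le> \<epsilon>" "\<And>y. H_tail st z Jc v \<theta> y \<le> \<epsilon> \<Longrightarrow> y0 \<le> y"
    using step_function_threshold_least[OF finite_Jc H_neg H_nonneg] assms by auto
  from Least_threshold_sqrt[OF this QH_neg H_neg QH_tail_eq_H_tail] show ?thesis
    unfolding QHT_eps_def HT_eps_def .
qed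

end

theorem theorem9:
  fixes P :: "'a::finite \<Rightarrow> 'a \<Rightarrow> real" and st :: "'a \<Rightarrow> real"
  assumes "ergodic_chain P"
    and "stationary_distr P st"
    and "reversible_chain P st"
    and "all_eigenvalues_positive P"
  shows "(\<forall>z J \<alpha> w \<delta> c0 cm. quantum_spectral_data P st z J \<alpha> w \<delta> c0 cm \<longrightarrow>
            QHT J \<alpha> \<delta> cm \<le> sqrt (HT P st z / 2))
       \<and> (\<forall>z \<epsilon> Jc v \<theta> J \<alpha> w \<delta> c0 cm. 0 < \<epsilon> \<and> \<epsilon> < 1 \<longrightarrow>
            classical_spectral_data P st z Jc v \<theta> \<longrightarrow>
            quantum_spectral_data P st z J \<alpha> w \<delta> c0 cm \<longrightarrow>
            QHT_eps J \<alpha> \<delta> cm \<epsilon> = sqrt (HT_eps st z Jc v \<theta> \<epsilon>))"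
proof -
  interpret irreducible_reversible_chain P st
    using assms(1-3) unfolding ergodic_chain_def by unfold_locales auto
  show ?thesis
  proof (intro conjI allI impI)
    fix z J \<alpha> w \<delta> c0 cm
    assume "quantum_spectral_data P st z J \<alpha> w \<delta> c0 cm"
    then interpret walk_decomposition P st z J \<alpha> w \<delta> c0 cm
      by unfold_locales
    show "QHT J \<alpha> \<delta> cm \<le> sqrt (HT P st z / 2)"
      by (rule QHT_le)
  next
    fix z :: 'a and \<epsilon> :: real and Jc v \<theta> J \<alpha> w \<delta> c0 cm
    assume \<epsilon>: "0 < \<epsilon> \<and> \<epsilon> < 1"
      and "classical_spectral_data P st z Jc v \<theta>" "quantum_spectral_data P st z J \<alpha> w \<delta> c0 cm"
    then interpret spectral_correspondence P st z J \<alpha> w \<delta> c0 cm Jc v \<theta>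
      by unfold_locales
    show "QHT_eps J \<alpha> \<delta> cm \<epsilon> = sqrt (HT_eps st z Jc v \<theta> \<epsilon>)"
      using \<epsilon> by (intro QHT_eps_eq) auto
  qed
qed

end
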